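(* Let $X$ be any topological space and let $Y$ be a topological space such that $\hat{c}(Y^\omega) > \pi w(Y) \geq \pi w(X)$. Then for every cardinal $\mu$ with $\omega \leq \mu \leq \pi w(X)$, the product space $X \times Y^\mu$ (with the Tychonoff product topology) has a $\sigma$-disjoint $\pi$-base.
   Context: All spaces are Hausdorff. A $\pi$-base for a space $Z$ is a family $\mathcal{P}$ of non-empty open subsets of $Z$ such that every non-empty open $U \subseteq Z$ contains some $P \in \mathcal{P}$; $\pi w(Z)$ is the minimum cardinality of a $\pi$-base of $Z$. A $\pi$-base is $\sigma$-disjoint if it is a countable union of families each consisting of pairwise disjoint sets. A cellular family in $Z$ is a family of pairwise disjoint non-empty open subsets of $Z$. $\hat{c}(Z)$ denotes the least cardinal $\kappa$ such that $Z$ has no cellular family of cardinality $\kappa$. *)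

theory Defs
  imports "HOL-Analysis.Analysis"
begin

definition pi_base :: "'a topology \<Rightarrow> 'a set set \<Rightarrow> bool" where
  "pi_base Z P \<longleftrightarrow>
     (\<forall>B\<in>P. openin Z B \<and> B \<noteq> {}) \<and>
     (\<forall>U. openin Z U \<and> U \<noteq> {} \<longrightarrow> (\<exists>B\<in>P. B \<subseteq> U))"

text \<open>A pi-base of minimum cardinality; its cardinality is the pi-weight of Z.\<close>
definition min_pi_base :: "'a topology \<Rightarrow> 'a set set \<Rightarrow> bool" where
  "min_pi_base Z P \<longleftrightarrow> pi_base Z P \<and> (\<forall>Q. pi_base Z Q \<longrightarrow> (card_of P, card_of Q) \<in> ordLeq)"

definition sigma_disjoint :: "'a set set \<Rightarrow> bool" where
  "sigma_disjoint P \<longleftrightarrow>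
     (\<exists>F :: nat \<Rightarrow> 'a set set. P = (\<Union>n. F n) \<and> (\<forall>n. pairwise disjnt (F n)))"

definition cellular :: "'a topology \<Rightarrow> 'a set set \<Rightarrow> bool" where
  "cellular Z C \<longleftrightarrow> (\<forall>B\<in>C. openin Z B \<and> B \<noteq> {}) \<and> pairwise disjnt C"

text \<open>chat_greater Z A means c-hat(Z) > |A|: every cardinal kappa <= |A| (i.e. the
  cardinality of some subset of A) is the cardinality of a cellular family in Z.\<close>
definition chat_greater :: "'a topology \<Rightarrow> 'b set \<Rightarrow> bool" where
  "chat_greater Z A \<longleftrightarrow> (\<forall>K. K \<subseteq> A \<longrightarrow> (\<exists>C. cellular Z C \<and> (card_of C, card_of K) \<in> ordIso))"

end

theory Submission
  imports Defs "HOL-Library.NList"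
begin

text \<open>Products of \<pi>-bases give \<pi>-bases, so \<open>X \<times> Y\<^bsup>I\<^esup>\<close> has a \<pi>-base indexed by pairs
  \<open>(W, xs)\<close> of a member of the \<pi>-base of \<open>X\<close> and a finite list of basic restrictions on
  coordinates; there are at most \<open>\<pi>w(Y)\<close> such indices. Since \<open>\<hat>c(Y\<^sup>\<omega>) > \<pi>w(Y)\<close>, they can
  be sent injectively into a cellular family \<open>C\<close> of \<open>Y\<^sup>\<omega>\<close>. Split \<open>I\<close> into countably many
  disjoint copies \<open>J\<^sub>n\<close> of \<open>\<omega>\<close>. For every \<open>n\<close>, shrinking each basic set whose list avoids
  \<open>J\<^sub>n\<close> by demanding that its \<open>J\<^sub>n\<close>-coordinates lie in the assigned member of \<open>C\<close> yields a
  disjoint family; as every list meets only finitely many \<open>J\<^sub>n\<close>, the union over \<open>n\<close> of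
  these families is again a \<pi>-base.\<close>

unbundle cardinal_syntax

lemma card_of_nlists_infinite:
  assumes "infinite A"
  shows "|nlists n A| \<le>o |A|"
proof (induction n)
  case 0
  have "A \<noteq> {}"
    using assms by auto
  then show ?case
    by (simp add: card_of_singl_ordLeq)
next
  case (Suc n)
  have "nlists (Suc n) A \<subseteq> (\<lambda>(a, xs). a # xs) ` (A \<times> nlists n A)"
    by (auto simp: in_nlists_Suc_iff)
  then have "|nlists (Suc n) A| \<le>o |A \<times> nlists n A|"
    by (rule surj_imp_ordLeq)
  also have "|A \<times> nlists n A| \<le>o |A \<times> A|"
    using Suc by (rule card_of_Times_mono2)
  also have "|A \<times> A| =o |A|"
    using assms by (rule card_of_Times_same_infinite)
  finally show ?case .
qed

lemma card_of_lists_infinite: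
  assumes "infinite A"
  shows "|lists A| \<le>o |A|"
proof -
  have "lists A = (\<Union>n. nlists n A)"
    unfolding nlists_def by blast
  moreover have "|UNIV :: nat set| \<le>o |A|"
    using assms infinite_iff_card_of_nat by blast
  then have "|\<Union>n. nlists n A| \<le>o |A|"
    using card_of_nlists_infinite[OF assms] by (intro card_of_UNION_ordLeq_infinite[OF assms]) auto
  ultimately show ?thesis
    by simp
qed

lemma card_of_Times_le_infinite:
  assumes "infinite C" and "|A| \<le>o |C|" and "|B| \<le>o |C|"
  shows "|A \<times> B| \<le>o |C|"
  by (rule card_of_Times_ordLeq_infinite_Field)
    (simp_all only: Field_card_of assms card_of_card_order_on not_False_eq_True)

lemma card_of_Times_lists_Times_le:
  assumes "infinite I" and "|I| \<le>o |Q|" and "|P| \<le>o |Q|"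
  shows "|P \<times> lists (I \<times> Q)| \<le>o |Q|"
proof -
  have Q: "infinite Q"
    using card_of_ordLeq_finite[OF assms(2)] assms(1) by auto
  have "infinite (I \<times> Q)"
    using assms(1) Q by (rule infinite_cartesian_product)
  then have "|lists (I \<times> Q)| \<le>o |I \<times> Q|"
    by (rule card_of_lists_infinite)
  also have "|I \<times> Q| \<le>o |Q|"
    using assms(2) card_of_mono1[OF order_refl] by (rule card_of_Times_le_infinite[OF Q])
  finally have "|lists (I \<times> Q)| \<le>o |Q|" .
  with assms(3) show ?thesis
    by (rule card_of_Times_le_infinite[OF Q])
qed

lemma pi_base_prod_topology:
  assumes "pi_base X P" and "pi_base Y Q"
  shows "pi_base (prod_topology X Y) {W \<times> V | W V. W \<in> P \<and> V \<in> Q}"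
  unfolding pi_base_def
proof (intro conjI allI impI ballI)
  fix B assume "B \<in> {W \<times> V | W V. W \<in> P \<and> V \<in> Q}"
  then obtain W V where "B = W \<times> V" "W \<in> P" "V \<in> Q"
    by blast
  then have "openin X W" "W \<noteq> {}" "openin Y V" "V \<noteq> {}"
    using assms unfolding pi_base_def by blast+
  with \<open>B = W \<times> V\<close> show "openin (prod_topology X Y) B" "B \<noteq> {}"
    by (simp_all add: openin_prod_Times_iff)
next
  fix U assume U: "openin (prod_topology X Y) U \<and> U \<noteq> {}"
  then obtain a b where "(a, b) \<in> U" by auto
  then obtain U1 V1 where U1: "openin X U1" "a \<in> U1" and V1: "openin Y V1" "b \<in> V1"
      and "U1 \<times> V1 \<subseteq> U"
    using U openin_prod_topology_alt by metis
  obtain W where "W \<in> P" "W \<subseteq> U1"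
    using assms(1) U1 unfolding pi_base_def by (metis empty_iff)
  moreover obtain V where "V \<in> Q" "V \<subseteq> V1"
    using assms(2) V1 unfolding pi_base_def by (metis empty_iff)
  ultimately have "W \<times> V \<in> {W \<times> V | W V. W \<in> P \<and> V \<in> Q}"
    by (intro CollectI exI[of _ W] exI[of _ V]) simp
  moreover have "W \<times> V \<subseteq> U1 \<times> V1"
    using \<open>W \<subseteq> U1\<close> \<open>V \<subseteq> V1\<close> by (intro Sigma_mono)
  ultimately show "\<exists>B \<in> {W \<times> V | W V. W \<in> P \<and> V \<in> Q}. B \<subseteq> U"
    using \<open>U1 \<times> V1 \<subseteq> U\<close> by (blast intro: order.trans)
qed

definition product_box :: "('i \<Rightarrow> 'b topology) \<Rightarrow> 'i set \<Rightarrow> ('i \<times> 'b set) list \<Rightarrow> ('i \<Rightarrow> 'b) set"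
  where "product_box Y I xs = {x \<in> topspace (product_topology Y I). \<forall>(i, q) \<in> set xs. x i \<in> q}"

lemma openin_product_box:
  assumes "set xs \<subseteq> (SIGMA i:I. Collect (openin (Y i)))"
  shows "openin (product_topology Y I) (product_box Y I xs)"
  using assms
proof (induction xs)
  case Nil
  show ?case
    using openin_topspace[of "product_topology Y I"] by (simp add: product_box_def)
next
  case (Cons iq xs)
  obtain i q where iq: "iq = (i, q)" by force
  then have "i \<in> I" "openin (Y i) q"
    using Cons.prems by auto
  then have "openin (product_topology Y I) {x \<in> topspace (product_topology Y I). x i \<in> q}"
    by (intro openin_continuous_map_preimage[OF continuous_map_product_projection])
  moreover have "openin (product_topology Y I) (product_box Y I xs)"
    using Cons by simp
  moreover have "product_box Y I (iq # xs)
      = {x \<in> topspace (product_topology Y I). x i \<in> q} \<inter> product_box Y I xs"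
    using iq by (auto simp: product_box_def)
  ultimately show ?case
    by (simp add: openin_Int)
qed

lemma product_box_subset_PiE:
  assumes "\<And>i q. (i, q) \<in> set xs \<Longrightarrow> q \<subseteq> U i"
    and "\<And>i. i \<in> I \<Longrightarrow> i \<notin> fst ` set xs \<Longrightarrow> topspace (Y i) \<subseteq> U i"
  shows "product_box Y I xs \<subseteq> Pi\<^sub>E I U"
proof
  fix x assume "x \<in> product_box Y I xs"
  then have x: "x \<in> (\<Pi>\<^sub>E i\<in>I. topspace (Y i))" "\<forall>(i, q) \<in> set xs. x i \<in> q"
    by (auto simp: product_box_def)
  show "x \<in> Pi\<^sub>E I U"
  proof (rule PiE_I)
    fix i assume "i \<in> I"
    show "x i \<in> U i"
    proof (cases "i \<in> fst ` set xs")
      case True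
      then obtain q where "(i, q) \<in> set xs"
        by force
      then show ?thesis
        using x(2) assms(1) by blast
    next
      case False
      then show ?thesis
        using assms(2) \<open>i \<in> I\<close> PiE_mem[OF x(1) \<open>i \<in> I\<close>] by blast
    qed
  next
    fix i assume "i \<notin> I"
    then show "x i = undefined"
      by (rule PiE_arb[OF x(1)])
  qed
qed

lemma product_box_map_nonempty:
  assumes "y \<in> topspace (product_topology Y I)" and "set ys \<subseteq> I"
    and "\<And>i. i \<in> set ys \<Longrightarrow> Q i \<inter> topspace (Y i) \<noteq> {}"
  shows "product_box Y I (map (\<lambda>i. (i, Q i)) ys) \<noteq> {}"
proof -
  obtain p where p: "\<forall>i \<in> set ys. p i \<in> Q i \<inter> topspace (Y i)"
    using bchoice[of "set ys" "\<lambda>i p. p \<in> Q i \<inter> topspace (Y i)"] assms(3) by blast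
  define x where "x i = (if i \<in> set ys then p i else y i)" for i
  have y: "y \<in> (\<Pi>\<^sub>E i\<in>I. topspace (Y i))"
    using assms(1) by simp
  have "x \<in> topspace (product_topology Y I)"
    unfolding topspace_product_topology
  proof (rule PiE_I)
    show "x i \<in> topspace (Y i)" if "i \<in> I" for i
      using p PiE_mem[OF y that] by (simp add: x_def)
    show "x i = undefined" if "i \<notin> I" for i
      using assms(2) PiE_arb[OF y that] that by (auto simp: x_def)
  qed
  moreover have "\<forall>(i, q) \<in> set (map (\<lambda>i. (i, Q i)) ys). x i \<in> q"
    using p by (auto simp: x_def)
  ultimately show ?thesis
    by (auto simp: product_box_def)
qed

lemma pi_base_product_boxes:
  assumes "\<And>i. i \<in> I \<Longrightarrow> pi_base (Y i) (P i)"
  shows "pi_base (product_topology Y I)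
           (product_box Y I ` {xs \<in> lists (Sigma I P). product_box Y I xs \<noteq> {}})"
  unfolding pi_base_def
proof (intro conjI allI impI ballI)
  fix B assume "B \<in> product_box Y I ` {xs \<in> lists (Sigma I P). product_box Y I xs \<noteq> {}}"
  then show "openin (product_topology Y I) B" "B \<noteq> {}"
    using assms by (auto simp: pi_base_def intro!: openin_product_box)
next
  fix U assume U: "openin (product_topology Y I) U \<and> U \<noteq> {}"
  then obtain y where "y \<in> U" by auto
  with U obtain V where V: "finite {i \<in> I. V i \<noteq> topspace (Y i)}" "\<And>i. i \<in> I \<Longrightarrow> openin (Y i) (V i)"
      "y \<in> Pi\<^sub>E I V" "Pi\<^sub>E I V \<subseteq> U"
    unfolding openin_product_topology_alt by metis
  define S where "S = {i \<in> I. V i \<noteq> topspace (Y i)}"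
  have "\<exists>q \<in> P i. q \<subseteq> V i" if "i \<in> S" for i
  proof -
    have "i \<in> I" "y i \<in> V i"
      using V(3) that by (auto simp: S_def PiE_iff)
    then show ?thesis
      using assms[of i] V(2) unfolding pi_base_def by (metis empty_iff)
  qed
  then obtain Q where Q: "\<And>i. i \<in> S \<Longrightarrow> Q i \<in> P i \<and> Q i \<subseteq> V i"
    by metis
  obtain ys where ys: "set ys = S"
    using V(1) finite_list S_def by metis
  define xs where "xs = map (\<lambda>i. (i, Q i)) ys"
  have "S \<subseteq> I"
    by (auto simp: S_def)
  then have "xs \<in> lists (Sigma I P)"
    using Q ys by (auto simp: xs_def)
  moreover have "product_box Y I xs \<noteq> {}"
  proof -
    have "Q i \<inter> topspace (Y i) \<noteq> {}" if "i \<in> S" for i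
      using assms[of i] Q[OF that] that openin_subset unfolding S_def pi_base_def by fastforce
    moreover have "y \<in> topspace (product_topology Y I)"
      using V(2,3) openin_subset by (fastforce simp: PiE_iff)
    ultimately show ?thesis
      unfolding xs_def using ys \<open>S \<subseteq> I\<close> by (intro product_box_map_nonempty) auto
  qed
  moreover have "product_box Y I xs \<subseteq> Pi\<^sub>E I V"
  proof (rule product_box_subset_PiE)
    show "q \<subseteq> V i" if "(i, q) \<in> set xs" for i q
      using that Q ys by (auto simp: xs_def)
    have "fst ` set xs = S"
      using ys by (simp add: xs_def image_image)
    then show "topspace (Y i) \<subseteq> V i" if "i \<in> I" "i \<notin> fst ` set xs" for i
      using that by (auto simp: S_def)
  qed
  then have "product_box Y I xs \<subseteq> U"
    using V(4) by blast
  ultimately show "\<exists>B \<in> product_box Y I ` {xs \<in> lists (Sigma I P). product_box Y I xs \<noteq> {}}. B \<subseteq> U"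
    by blast
qed

lemma continuous_map_product_reindex:
  assumes "range j \<subseteq> I"
  shows "continuous_map (product_topology Y I) (product_topology (\<lambda>k. Y (j k)) UNIV) (\<lambda>x k. x (j k))"
  using assms by (auto simp: continuous_map_componentwise_UNIV intro: continuous_map_product_projection)

lemma product_box_reindex_surj:
  assumes "inj j" and "range j \<subseteq> I" and "range j \<inter> fst ` set xs = {}"
    and "y \<in> product_box Y I xs" and "c \<in> topspace (product_topology (\<lambda>k. Y (j k)) UNIV)"
  shows "\<exists>x \<in> product_box Y I xs. (\<lambda>k. x (j k)) = c"
proof
  define x where "x i = (if i \<in> range j then c (inv j i) else y i)" for i
  show "(\<lambda>k. x (j k)) = c"
    using assms(1) by (simp add: x_def)
  have y: "y \<in> (\<Pi>\<^sub>E i\<in>I. topspace (Y i))" "\<forall>(i, q) \<in> set xs. y i \<in> q"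
    using assms(4) by (auto simp: product_box_def)
  have c: "c k \<in> topspace (Y (j k))" for k
    using assms(5) by (simp add: PiE_iff)
  have "x \<in> (\<Pi>\<^sub>E i\<in>I. topspace (Y i))"
  proof (rule PiE_I)
    fix i assume "i \<in> I"
    show "x i \<in> topspace (Y i)"
    proof (cases "i \<in> range j")
      case True
      then obtain k where "i = j k"
        by blast
      then show ?thesis
        using c[of k] assms(1) by (simp add: x_def)
    next
      case False
      then show ?thesis
        using PiE_mem[OF y(1) \<open>i \<in> I\<close>] by (simp add: x_def)
    qed
  next
    fix i assume "i \<notin> I"
    then show "x i = undefined"
      using assms(2) PiE_arb[OF y(1)] by (auto simp: x_def)
  qed
  moreover have "x i \<in> q" if "(i, q) \<in> set xs" for i q
  proof -
    have "i \<notin> range j"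
      using assms(3) that by force
    then show ?thesis
      using y(2) that by (auto simp: x_def)
  qed
  ultimately show "x \<in> product_box Y I xs"
    by (auto simp: product_box_def)
qed

lemma openin_product_box_Int_reindex:
  assumes "inj j" and "range j \<subseteq> I" and "range j \<inter> fst ` set xs = {}"
    and "set xs \<subseteq> (SIGMA i:I. Collect (openin (Y i)))" and "product_box Y I xs \<noteq> {}"
    and "openin (product_topology (\<lambda>k. Y (j k)) UNIV) c" and "c \<noteq> {}"
  shows "openin (product_topology Y I)
           (product_box Y I xs \<inter> {x \<in> topspace (product_topology Y I). (\<lambda>k. x (j k)) \<in> c})"
    and "product_box Y I xs \<inter> {x \<in> topspace (product_topology Y I). (\<lambda>k. x (j k)) \<in> c} \<noteq> {}"
proof -
  show "openin (product_topology Y I)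
          (product_box Y I xs \<inter> {x \<in> topspace (product_topology Y I). (\<lambda>k. x (j k)) \<in> c})"
    using assms(2,4,6)
    by (intro openin_Int openin_product_box openin_continuous_map_preimage[OF continuous_map_product_reindex])
  obtain y c0 where "y \<in> product_box Y I xs" "c0 \<in> c"
    using assms(5,7) by blast
  moreover have "c0 \<in> topspace (product_topology (\<lambda>k. Y (j k)) UNIV)"
    using openin_subset[OF assms(6)] \<open>c0 \<in> c\<close> by blast
  ultimately obtain x where "x \<in> product_box Y I xs" "(\<lambda>k. x (j k)) = c0"
    using product_box_reindex_surj[OF assms(1-3)] by metis
  then show "product_box Y I xs \<inter> {x \<in> topspace (product_topology Y I). (\<lambda>k. x (j k)) \<in> c} \<noteq> {}"
    using \<open>c0 \<in> c\<close> by (auto simp: product_box_def)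
qed

lemma obtain_disjoint_copies_of_nat:
  assumes "infinite I"
  obtains j :: "nat \<Rightarrow> nat \<Rightarrow> 'i"
    where "inj (case_prod j)" and "\<And>n. range (j n) \<subseteq> I" and "\<And>n. inj (j n)"
proof -
  obtain e :: "nat \<Rightarrow> 'i" where "inj e" "range e \<subseteq> I"
    using infinite_countable_subset assms by blast
  define j where "j n m = e (prod_encode (n, m))" for n m
  have "case_prod j = e \<circ> prod_encode"
    by (auto simp: j_def)
  then have "inj (case_prod j)"
    using inj_compose[OF \<open>inj e\<close> inj_prod_encode] by simp
  moreover have "range (j n) \<subseteq> I" for n
    using \<open>range e \<subseteq> I\<close> by (auto simp: j_def)
  moreover have "inj (j n)" for n
  proof (rule injI)
    fix m m' assume "j n m = j n m'"
    then have "case_prod j (n, m) = case_prod j (n, m')"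
      by simp
    then show "m = m'"
      using injD[OF \<open>inj (case_prod j)\<close>] by blast
  qed
  ultimately show thesis
    by (rule that)
qed

lemma finite_rows_meeting:
  assumes "inj (case_prod j)" and "finite S"
  shows "finite {n. range (j n) \<inter> S \<noteq> {}}"
proof -
  have "{n. range (j n) \<inter> S \<noteq> {}} \<subseteq> fst ` (case_prod j -` S)"
  proof
    fix n assume "n \<in> {n. range (j n) \<inter> S \<noteq> {}}"
    then obtain m where "j n m \<in> S"
      by blast
    then show "n \<in> fst ` (case_prod j -` S)"
      by (intro image_eqI[of _ fst "(n, m)"]) auto
  qed
  then show ?thesis
    using finite_vimageI[OF assms(2,1)] finite_surj by blast
qed

lemma sigma_disjoint_pi_base_of_shrinkings:
  fixes R :: "nat \<Rightarrow> 'a \<Rightarrow> 'b set"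
  assumes "\<And>U. openin Z U \<Longrightarrow> U \<noteq> {} \<Longrightarrow> \<exists>a \<in> A. f a \<subseteq> U"
    and "\<And>n a. a \<in> D n \<Longrightarrow> openin Z (R n a) \<and> R n a \<noteq> {} \<and> R n a \<subseteq> f a"
    and "\<And>a. a \<in> A \<Longrightarrow> \<exists>n. a \<in> D n"
    and "\<And>n. pairwise (\<lambda>a b. disjnt (R n a) (R n b)) (D n)"
  shows "pi_base Z (\<Union>n. R n ` D n) \<and> sigma_disjoint (\<Union>n. R n ` D n)"
proof
  show "pi_base Z (\<Union>n. R n ` D n)"
    unfolding pi_base_def
  proof (intro conjI allI impI ballI)
    fix B assume "B \<in> (\<Union>n. R n ` D n)"
    then obtain n a where "a \<in> D n" "B = R n a"
      by blast
    then show "openin Z B" "B \<noteq> {}"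
      using assms(2)[OF \<open>a \<in> D n\<close>] by simp_all
  next
    fix U assume "openin Z U \<and> U \<noteq> {}"
    then obtain a where "a \<in> A" "f a \<subseteq> U"
      using assms(1) by blast
    moreover obtain n where "a \<in> D n"
      using assms(3) \<open>a \<in> A\<close> by blast
    ultimately have "R n a \<subseteq> U"
      using assms(2)[OF \<open>a \<in> D n\<close>] by blast
    then show "\<exists>B \<in> (\<Union>n. R n ` D n). B \<subseteq> U"
      using \<open>a \<in> D n\<close> by blast
  qed
  have disj: "pairwise disjnt (R n ` D n)" for n
  proof (rule pairwiseI)
    fix B B' assume "B \<in> R n ` D n" "B' \<in> R n ` D n" "B \<noteq> B'"
    then obtain a b where ab: "a \<in> D n" "b \<in> D n" "B = R n a" "B' = R n b"
      by (auto elim!: imageE)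
    moreover have "a \<noteq> b"
      using \<open>B \<noteq> B'\<close> ab(3,4) by auto
    ultimately show "disjnt B B'"
      using assms(4)[of n] unfolding pairwise_def by simp
  qed
  show "sigma_disjoint (\<Union>n. R n ` D n)"
    unfolding sigma_disjoint_def by (rule exI[where x = "\<lambda>n. R n ` D n"]) (simp add: disj)
qed

lemma prod_product_box_subset_open:
  assumes "pi_base X PX" and "pi_base Y PY"
    and "openin (prod_topology X (product_topology (\<lambda>_. Y) I)) U" and "U \<noteq> {}"
  obtains W xs where "W \<in> PX" and "xs \<in> lists (I \<times> PY)" and "product_box (\<lambda>_. Y) I xs \<noteq> {}"
    and "W \<times> product_box (\<lambda>_. Y) I xs \<subseteq> U"
proof -
  let ?L = "{xs \<in> lists (I \<times> PY). product_box (\<lambda>_. Y) I xs \<noteq> {}}"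
  have "pi_base (product_topology (\<lambda>_. Y) I) (product_box (\<lambda>_. Y) I ` ?L)"
    using assms(2) by (rule pi_base_product_boxes)
  then have "pi_base (prod_topology X (product_topology (\<lambda>_. Y) I))
      {W \<times> V | W V. W \<in> PX \<and> V \<in> product_box (\<lambda>_. Y) I ` ?L}"
    by (rule pi_base_prod_topology[OF assms(1)])
  then obtain B where "B \<in> {W \<times> V | W V. W \<in> PX \<and> V \<in> product_box (\<lambda>_. Y) I ` ?L}" "B \<subseteq> U"
    using assms(3,4) unfolding pi_base_def by meson
  then obtain W xs where "W \<in> PX" "xs \<in> ?L" "W \<times> product_box (\<lambda>_. Y) I xs \<subseteq> U"
    by blast
  then show thesis
    using that by blast
qed

lemma sigma_disjoint_pi_base_prod_power:
  fixes j :: "nat \<Rightarrow> nat \<Rightarrow> 'i"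
  assumes PX: "pi_base X PX" and PY: "pi_base Y PY"
    and C: "cellular (product_topology (\<lambda>_::nat. Y) UNIV) C"
    and g: "inj_on g (PX \<times> lists (I \<times> PY))" "g ` (PX \<times> lists (I \<times> PY)) \<subseteq> C"
    and j: "inj (case_prod j)" "\<And>n. range (j n) \<subseteq> I" "\<And>n. inj (j n)"
  shows "\<exists>P. pi_base (prod_topology X (product_topology (\<lambda>_. Y) I)) P \<and> sigma_disjoint P"
proof -
  let ?T = "product_topology (\<lambda>_. Y) I"
  let ?box = "product_box (\<lambda>_. Y) I"
  define A where "A = PX \<times> {xs \<in> lists (I \<times> PY). ?box xs \<noteq> {}}"
  define D where "D n = {(W, xs) \<in> A. range (j n) \<inter> fst ` set xs = {}}" for n
  define R where "R n = (\<lambda>(W, xs). W \<times> (?box xs \<inter> {x \<in> topspace ?T. (\<lambda>k. x (j n k)) \<in> g (W, xs)}))"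
    for n
  have "pi_base (prod_topology X ?T) (\<Union>n. R n ` D n) \<and> sigma_disjoint (\<Union>n. R n ` D n)"
  proof (rule sigma_disjoint_pi_base_of_shrinkings)
    fix U assume "openin (prod_topology X ?T) U" "U \<noteq> {}"
    then obtain W xs where "W \<in> PX" "xs \<in> lists (I \<times> PY)" "?box xs \<noteq> {}" "W \<times> ?box xs \<subseteq> U"
      by (rule prod_product_box_subset_open[OF PX PY])
    then show "\<exists>a \<in> A. (\<lambda>(W, xs). W \<times> ?box xs) a \<subseteq> U"
      unfolding A_def by (intro bexI[of _ "(W, xs)"]) auto
  next
    fix n a assume "a \<in> D n"
    then obtain W xs where a: "a = (W, xs)" "W \<in> PX" "xs \<in> lists (I \<times> PY)" "?box xs \<noteq> {}"
        "range (j n) \<inter> fst ` set xs = {}"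
      by (auto simp: D_def A_def)
    have xs: "set xs \<subseteq> (SIGMA i:I. Collect (openin Y))"
      using a(3) PY unfolding pi_base_def by auto
    have "g (W, xs) \<in> C"
      using g(2) a(2,3) by blast
    then have "openin (product_topology (\<lambda>_::nat. Y) UNIV) (g (W, xs))" "g (W, xs) \<noteq> {}"
      using C unfolding cellular_def by blast+
    then have "openin ?T (?box xs \<inter> {x \<in> topspace ?T. (\<lambda>k. x (j n k)) \<in> g (W, xs)})"
        "?box xs \<inter> {x \<in> topspace ?T. (\<lambda>k. x (j n k)) \<in> g (W, xs)} \<noteq> {}"
      using openin_product_box_Int_reindex[OF j(3) j(2) a(5) xs a(4)] by simp_all
    moreover have "openin X W" "W \<noteq> {}"
      using PX a(2) unfolding pi_base_def by blast+
    ultimately show "openin (prod_topology X ?T) (R n a) \<and> R n a \<noteq> {} \<and> R n a \<subseteq> (\<lambda>(W, xs). W \<times> ?box xs) a"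
      unfolding R_def a(1) by (simp add: openin_prod_Times_iff Sigma_mono)
  next
    fix a assume "a \<in> A"
    then obtain W xs where a: "a = (W, xs)"
      by force
    have "finite {n. range (j n) \<inter> fst ` set xs \<noteq> {}}"
      using finite_rows_meeting[OF j(1)] by blast
    then obtain n where "range (j n) \<inter> fst ` set xs = {}"
      using ex_new_if_finite[OF infinite_UNIV_nat] by blast
    then show "\<exists>n. a \<in> D n"
      using \<open>a \<in> A\<close> a by (auto simp: D_def)
  next
    fix n
    show "pairwise (\<lambda>a b. disjnt (R n a) (R n b)) (D n)"
    proof (rule pairwiseI)
      fix a b assume "a \<in> D n" "b \<in> D n" "a \<noteq> b"
      then have "a \<in> PX \<times> lists (I \<times> PY)" "b \<in> PX \<times> lists (I \<times> PY)"
        unfolding D_def A_def by blast+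
      then have "g a \<noteq> g b" "g a \<in> C" "g b \<in> C"
        using g \<open>a \<noteq> b\<close> by (auto dest: inj_onD)
      then have "disjnt (g a) (g b)"
        using C unfolding cellular_def pairwise_def by blast
      then show "disjnt (R n a) (R n b)"
        unfolding R_def disjnt_def by (auto split: prod.splits)
    qed
  qed
  then show ?thesis
    by blast
qed

theorem lemma2:
  fixes X :: "'a topology" and Y :: "'b topology" and I :: "'i set"
    and PX :: "'a set set" and PY :: "'b set set"
  assumes "Hausdorff_space X" and "Hausdorff_space Y"
    and "min_pi_base X PX" and "min_pi_base Y PY"
    and "chat_greater (product_topology (\<lambda>_::nat. Y) UNIV) PY"
    and "(card_of PX, card_of PY) \<in> ordLeq"
    and "infinite I" and "(card_of I, card_of PX) \<in> ordLeq"
  shows "\<exists>P. pi_base (prod_topology X (product_topology (\<lambda>_. Y) I)) P \<and> sigma_disjoint P"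
proof -
  have PX: "pi_base X PX" and PY: "pi_base Y PY"
    using assms(3,4) by (auto simp: min_pi_base_def)
  obtain C where C: "cellular (product_topology (\<lambda>_::nat. Y) UNIV) C" "|C| =o |PY|"
    using assms(5) unfolding chat_greater_def by blast
  have "|PX \<times> lists (I \<times> PY)| \<le>o |PY|"
    using assms(6-8) ordLeq_transitive by (intro card_of_Times_lists_Times_le) auto
  also have "|PY| =o |C|"
    using C(2) by (rule ordIso_symmetric)
  finally obtain g where "inj_on g (PX \<times> lists (I \<times> PY))" "g ` (PX \<times> lists (I \<times> PY)) \<subseteq> C"
    using card_of_ordLeq by metis
  moreover obtain j :: "nat \<Rightarrow> nat \<Rightarrow> 'i"
    where "inj (case_prod j)" "\<And>n. range (j n) \<subseteq> I" "\<And>n. inj (j n)"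
    using obtain_disjoint_copies_of_nat assms(7) by blast
  ultimately show ?thesis
    by (rule sigma_disjoint_pi_base_prod_power[OF PX PY C(1)])
qed

end
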